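(* Let $n=m+s$ and consider the system $$\begin{bmatrix}\dot x_a\\ \dot x_u\end{bmatrix}=[J(x)-R(x)]\begin{bmatrix}\nabla_{x_a}\mathcal H(x)\\ \nabla_{x_u}\mathcal H(x)\end{bmatrix}+\begin{bmatrix}u-d_a(x)\\ -d_u(x)\end{bmatrix},$$ with $x=\operatorname{col}(x_a,x_u)$, $x_a\in\mathbb R^m$, $x_u\in\mathbb R^s$, $u\in\mathbb R^m$, smooth $\mathcal H:\mathbb R^n\to\mathbb R_+$, and $J=\begin{bmatrix}J_{aa}&J_{au}\\-J_{au}^\top&J_{uu}\end{bmatrix}=-J^\top$, $R=\begin{bmatrix}R_{aa}&R_{au}\\R_{au}^\top&R_{uu}\end{bmatrix}=R^\top\ge0$ (possibly state-dependent). Assume: $d_a(x)=G_d(x)\bar d_a$ with $\bar d_a\in\mathbb R^m$ constant and $G_d:\mathbb R^n\to\mathbb R^{m\times m}$ full rank with $G_d<0$; $d_u(x)=(J_{au}(x)+R_{au}(x))^\top\bar d_u$ with $\bar d_u\in\mathbb R^m$ constant; and there exists an isolated $\bar x=(\bar x_a,\bar x_u)$ with $\bar x=\arg\min\mathbf H(x)$, where $\mathbf H(x):=\mathcal H(x)+x_a^\top\bar d_u$. Let $K_i\in\mathbb R^{m\times m}$ be symmetric positive definite, choose $J_{c_1}=\tfrac12(G_d-G_d^\top)$, $R_{c_1}=-\tfrac12(G_d+G_d^\top)$, and close the loop with $$u=[-J_{aa}+R_{aa}+J_{c_1}-R_{c_1}]\nabla_{x_a}\mathcal H+[J_{c_1}-R_{c_1}]K_i(x_a-x_c)+2R_{au}\nabla_{x_u}\mathcal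 H,$$ $$\dot x_c=(J_{au}+R_{au})\nabla_{x_u}\mathcal H,\qquad x_c\in\mathbb R^m$$ (the controller with $R_{c_2}=0_{m\times m}$), written in the coordinates $w=(w_a,w_u,w_c)=(x_a,x_u,x_a-x_c)$. Then: (i) $\bar w=(\bar x_a,\bar x_u,K_i^{-1}[\bar d_a+\bar d_u])$ is a stable equilibrium of the closed-loop system; (ii) if the signal $Y_u:=\nabla_{w_a}\mathbf H(w_a,w_u)+K_i(w_c-\bar w_c)$, with $\bar w_c=K_i^{-1}[\bar d_a+\bar d_u]$, is a detectable output, the equilibrium is asymptotically stable; (iii) the stability properties are global if $\mathbf H$ is radially unbounded.
   Context: $\nabla$ denotes the transposed gradient and $\nabla_{x_a},\nabla_{x_u},\nabla_{w_a}$ transposed partial gradients. $G_d<0$ means negative definite. "Detectable output" means that closed-loop solutions along which the output is identically zero converge to the equilibrium. All functions are smooth. *)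

theory Defs
  imports "HOL-Analysis.Analysis"
begin

text \<open>C^0 = continuous; C^(k+1) = differentiable everywhere and every directional
  derivative x |-> Df(x) v is C^k. In finite dimensions this is the usual C^k.\<close>
fun Ck :: "nat \<Rightarrow> ('a::real_normed_vector \<Rightarrow> 'b::real_normed_vector) \<Rightarrow> bool" where
  "Ck 0 f = continuous_on UNIV f"
| "Ck (Suc k) f = ((\<forall>x. f differentiable (at x)) \<and>
                   (\<forall>v. Ck k (\<lambda>x. frechet_derivative f (at x) v)))"

definition smooth :: "('a::real_normed_vector \<Rightarrow> 'b::real_normed_vector) \<Rightarrow> bool" where
  "smooth f \<longleftrightarrow> (\<forall>k. Ck k f)"

definition grad :: "('a::real_inner \<Rightarrow> real) \<Rightarrow> 'a \<Rightarrow> 'a" where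
  "grad f x = (THE g. GDERIV f x :> g)"

definition grad_a :: "((real^'m) \<times> (real^'s) \<Rightarrow> real) \<Rightarrow> (real^'m) \<times> (real^'s) \<Rightarrow> real^'m" where
  "grad_a f x = fst (grad f x)"
definition grad_u :: "((real^'m) \<times> (real^'s) \<Rightarrow> real) \<Rightarrow> (real^'m) \<times> (real^'s) \<Rightarrow> real^'s" where
  "grad_u f x = snd (grad f x)"

definition neg_def :: "real^'m^'m \<Rightarrow> bool" where
  "neg_def A \<longleftrightarrow> (\<forall>v. v \<noteq> 0 \<longrightarrow> v \<bullet> (A *v v) < 0)"

definition pos_def :: "real^'m^'m \<Rightarrow> bool" where
  "pos_def A \<longleftrightarrow> (\<forall>v. v \<noteq> 0 \<longrightarrow> v \<bullet> (A *v v) > 0)"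

definition block_psd :: "real^'m^'m \<Rightarrow> real^'s^'m \<Rightarrow> real^'s^'s \<Rightarrow> bool" where
  "block_psd Raa Rau Ruu \<longleftrightarrow>
     (\<forall>va vu. va \<bullet> (Raa *v va) + va \<bullet> (Rau *v vu) + vu \<bullet> (transpose Rau *v va)
              + vu \<bullet> (Ruu *v vu) \<ge> 0)"

type_synonym ('m,'s) st = "(real^'m) \<times> (real^'s)"

text \<open>Plant: xdot = [J - R] grad H + col(u - d_a(x), - d_u(x)), with
  J = [Jaa Jau; -Jau^T Juu], R = [Raa Rau; Rau^T Ruu],
  d_a(x) = Gd(x) da_bar, d_u(x) = (Jau(x) + Rau(x))^T du_bar.\<close>
definition plant ::
  "(('m,'s) st \<Rightarrow> real^'m^'m) \<Rightarrow> (('m,'s) st \<Rightarrow> real^'s^'m) \<Rightarrow> (('m,'s) st \<Rightarrow> real^'s^'s) \<Rightarrow>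
   (('m,'s) st \<Rightarrow> real^'m^'m) \<Rightarrow> (('m,'s) st \<Rightarrow> real^'s^'m) \<Rightarrow> (('m,'s) st \<Rightarrow> real^'s^'s) \<Rightarrow>
   (('m,'s) st \<Rightarrow> real^'m^'m) \<Rightarrow> real^'m \<Rightarrow> real^'m \<Rightarrow> (('m,'s) st \<Rightarrow> real) \<Rightarrow>
   ('m,'s) st \<Rightarrow> real^'m \<Rightarrow> ('m,'s) st" where
  "plant Jaa Jau Juu Raa Rau Ruu Gd da du H x u =
     (let ga = grad_a H x; gu = grad_u H x in
      ((Jaa x - Raa x) *v ga + (Jau x - Rau x) *v gu + u - Gd x *v da,
       (- transpose (Jau x) - transpose (Rau x)) *v ga + (Juu x - Ruu x) *v gu
         - transpose (Jau x + Rau x) *v du))"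

definition Jc1 :: "real^'m^'m \<Rightarrow> real^'m^'m" where
  "Jc1 G = (1/2) *\<^sub>R (G - transpose G)"
definition Rc1 :: "real^'m^'m \<Rightarrow> real^'m^'m" where
  "Rc1 G = - (1/2) *\<^sub>R (G + transpose G)"

definition ctrl ::
  "(('m,'s) st \<Rightarrow> real^'m^'m) \<Rightarrow> (('m,'s) st \<Rightarrow> real^'m^'m) \<Rightarrow> (('m,'s) st \<Rightarrow> real^'s^'m) \<Rightarrow>
   (('m,'s) st \<Rightarrow> real^'m^'m) \<Rightarrow> real^'m^'m \<Rightarrow> (('m,'s) st \<Rightarrow> real) \<Rightarrow>
   ('m,'s) st \<Rightarrow> real^'m \<Rightarrow> real^'m" where
  "ctrl Jaa Raa Rau Gd Ki H x xc =
     (- Jaa x + Raa x + Jc1 (Gd x) - Rc1 (Gd x)) *v grad_a H x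
     + (Jc1 (Gd x) - Rc1 (Gd x)) *v (Ki *v (fst x - xc))
     + 2 *\<^sub>R (Rau x *v grad_u H x)"

definition ctrl_dyn ::
  "(('m,'s) st \<Rightarrow> real^'s^'m) \<Rightarrow> (('m,'s) st \<Rightarrow> real^'s^'m) \<Rightarrow> (('m,'s) st \<Rightarrow> real) \<Rightarrow>
   ('m,'s) st \<Rightarrow> real^'m" where
  "ctrl_dyn Jau Rau H x = (Jau x + Rau x) *v grad_u H x"

text \<open>Closed loop in the coordinates w = (w_a, w_u, w_c) = (x_a, x_u, x_a - x_c).\<close>
definition closed_loop_w ::
  "(('m,'s) st \<Rightarrow> real^'m^'m) \<Rightarrow> (('m,'s) st \<Rightarrow> real^'s^'m) \<Rightarrow> (('m,'s) st \<Rightarrow> real^'s^'s) \<Rightarrow>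
   (('m,'s) st \<Rightarrow> real^'m^'m) \<Rightarrow> (('m,'s) st \<Rightarrow> real^'s^'m) \<Rightarrow> (('m,'s) st \<Rightarrow> real^'s^'s) \<Rightarrow>
   (('m,'s) st \<Rightarrow> real^'m^'m) \<Rightarrow> real^'m \<Rightarrow> real^'m \<Rightarrow> real^'m^'m \<Rightarrow> (('m,'s) st \<Rightarrow> real) \<Rightarrow>
   (real^'m) \<times> (real^'s) \<times> (real^'m) \<Rightarrow> (real^'m) \<times> (real^'s) \<times> (real^'m)" where
  "closed_loop_w Jaa Jau Juu Raa Rau Ruu Gd da du Ki H w =
     (let x = (fst w, fst (snd w)); xc = fst w - snd (snd w);
          xdot = plant Jaa Jau Juu Raa Rau Ruu Gd da du H x (ctrl Jaa Raa Rau Gd Ki H x xc);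
          xcdot = ctrl_dyn Jau Rau H x
      in (fst xdot, snd xdot, fst xdot - xcdot))"

definition solution_on :: "('a::real_normed_vector \<Rightarrow> 'a) \<Rightarrow> (real \<Rightarrow> 'a) \<Rightarrow> real set \<Rightarrow> bool" where
  "solution_on F y I \<longleftrightarrow> (\<forall>t\<in>I. (y has_vector_derivative F (y t)) (at t within I))"

definition lyap_stable :: "('a::real_normed_vector \<Rightarrow> 'a) \<Rightarrow> 'a \<Rightarrow> bool" where
  "lyap_stable F e \<longleftrightarrow> F e = 0 \<and>
     (\<forall>\<epsilon>>0. \<exists>\<delta>>0. \<forall>y T. solution_on F y {0..T} \<longrightarrow> dist (y 0) e < \<delta> \<longrightarrow>
        (\<forall>t\<in>{0..T}. dist (y t) e < \<epsilon>))"

definition asym_stable :: "('a::real_normed_vector \<Rightarrow> 'a) \<Rightarrow> 'a \<Rightarrow> bool" where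
  "asym_stable F e \<longleftrightarrow> lyap_stable F e \<and>
     (\<exists>\<delta>>0. \<forall>y. solution_on F y {0..} \<longrightarrow> dist (y 0) e < \<delta> \<longrightarrow> (y \<longlongrightarrow> e) at_top)"

definition glob_stable :: "('a::real_normed_vector \<Rightarrow> 'a) \<Rightarrow> 'a \<Rightarrow> bool" where
  "glob_stable F e \<longleftrightarrow> lyap_stable F e \<and>
     (\<forall>r. \<exists>B. \<forall>y T. solution_on F y {0..T} \<longrightarrow> dist (y 0) e < r \<longrightarrow>
        (\<forall>t\<in>{0..T}. dist (y t) e < B))"

definition glob_asym_stable :: "('a::real_normed_vector \<Rightarrow> 'a) \<Rightarrow> 'a \<Rightarrow> bool" where
  "glob_asym_stable F e \<longleftrightarrow> lyap_stable F e \<and>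
     (\<forall>y. solution_on F y {0..} \<longrightarrow> (y \<longlongrightarrow> e) at_top)"

definition detectable :: "('a::real_normed_vector \<Rightarrow> 'a) \<Rightarrow> ('a \<Rightarrow> 'b::zero) \<Rightarrow> 'a \<Rightarrow> bool" where
  "detectable F Y e \<longleftrightarrow>
     (\<forall>y. solution_on F y {0..} \<longrightarrow> (\<forall>t\<ge>0. Y (y t) = 0) \<longrightarrow> (y \<longlongrightarrow> e) at_top)"

definition radially_unbounded :: "('a::real_normed_vector \<Rightarrow> real) \<Rightarrow> bool" where
  "radially_unbounded f \<longleftrightarrow> filterlim f at_top at_infinity"

end

theory Submission
  imports Defs "HOL-Complex_Analysis.Great_Picard"
begin

(* With p = w_c - wbar_c, the function
     V(w) = HH(w_a, w_u) - HH(xbar) + p^T K_i p / 2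
   is a Lyapunov function for the closed loop. The control law cancels J_aa and R_aa and turns the
   w_a-dynamics into G_d Y_u + (J_au + R_au) grad_u H, so along solutions
     dV/dt = Y_u^T G_d Y_u - grad_u H^T R_uu grad_u H <= 0.
   Since xbar is an isolated minimiser of HH, wbar is a strict local minimum of V, which gives
   stability. dV/dt = 0 forces Y_u = 0; a LaSalle-type argument (translates of a bounded solution
   accumulate on a solution along which V is constant) combined with detectability gives
   convergence. Radial unboundedness of HH makes the sublevel sets of V bounded, hence the global
   statements. *)

section \<open>Solutions and Lyapunov functions\<close>

lemma solution_on_continuous: "solution_on F y I \<Longrightarrow> continuous_on I y"
  unfolding solution_on_def continuous_on_eq_continuous_within
  using has_vector_derivative_continuous by blast

lemma solution_on_subset: "solution_on F y I \<Longrightarrow> J \<subseteq> I \<Longrightarrow> solution_on F y J"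
  unfolding solution_on_def using has_vector_derivative_within_subset by blast

lemma solution_on_shift:
  assumes sol: "solution_on F y {0..}" and "c \<ge> 0"
  shows "solution_on F (\<lambda>t. y (c + t)) {0..}"
  unfolding solution_on_def
proof
  fix t :: real assume "t \<in> {0..}"
  with sol \<open>c \<ge> 0\<close> have "(y has_vector_derivative F (y (c + t))) (at (c + t) within {0..})"
    unfolding solution_on_def by auto
  then have "(y has_vector_derivative F (y (c + t))) (at (c + t) within (\<lambda>t. c + t) ` {0..})"
    by (rule has_vector_derivative_within_subset) (use \<open>c \<ge> 0\<close> in auto)
  moreover have "((\<lambda>t. c + t) has_vector_derivative 1) (at t within {0..})"
    by (auto intro!: derivative_eq_intros)
  ultimately show "((\<lambda>t. y (c + t)) has_vector_derivative F (y (c + t))) (at t within {0..})"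
    using vector_diff_chain_within by (fastforce simp: o_def)
qed

lemma solution_on_lipschitz:
  assumes sol: "solution_on F y I" and "convex I"
    and bound: "\<And>t. t \<in> I \<Longrightarrow> norm (F (y t)) \<le> L" and "s \<in> I" "t \<in> I"
  shows "dist (y s) (y t) \<le> L * dist s t"
proof -
  have "norm (y s - y t) \<le> L * norm (s - t)"
  proof (rule differentiable_bound[OF \<open>convex I\<close> _ _ \<open>s \<in> I\<close> \<open>t \<in> I\<close>])
    fix \<tau> assume "\<tau> \<in> I"
    then show "(y has_derivative (\<lambda>h. h *\<^sub>R F (y \<tau>))) (at \<tau> within I)"
      using sol unfolding solution_on_def has_vector_derivative_def by blast
    show "onorm (\<lambda>h. h *\<^sub>R F (y \<tau>)) \<le> L"
      using bound[OF \<open>\<tau> \<in> I\<close>] by (simp add: onorm_scaleR_left onorm_id)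
  qed
  then show ?thesis by (simp add: dist_norm)
qed

lemma has_real_derivative_GDERIV_compose:
  assumes "GDERIV V (y t) :> g" and "(y has_vector_derivative v) (at t within I)"
  shows "((\<lambda>t. V (y t)) has_real_derivative g \<bullet> v) (at t within I)"
proof -
  have "((\<lambda>t. V (y t)) has_derivative (\<lambda>h. (h *\<^sub>R v) \<bullet> g)) (at t within I)"
    using has_derivative_compose[OF assms(2)[unfolded has_vector_derivative_def] assms(1)[unfolded gderiv_def]] .
  moreover have "(\<lambda>h. (h *\<^sub>R v) \<bullet> g) = (*) (g \<bullet> v)"
    by (auto simp: inner_commute)
  ultimately show ?thesis
    by (simp add: has_field_derivative_def)
qed

lemma lyapunov_nonincreasing:
  assumes grad: "\<And>w. GDERIV V w :> DV w" and decr: "\<And>w. DV w \<bullet> F w \<le> 0"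
    and sol: "solution_on F y I" and "is_interval I" "s \<in> I" "t \<in> I" "s \<le> t"
  shows "V (y t) \<le> V (y s)"
proof -
  have sub: "{s..t} \<subseteq> I"
    using mem_is_interval_1_I[OF \<open>is_interval I\<close> \<open>s \<in> I\<close> \<open>t \<in> I\<close>] by auto
  have "((\<lambda>t. V (y t)) has_derivative (*) (DV (y \<tau>) \<bullet> F (y \<tau>))) (at \<tau> within {s..t})"
    if "s \<le> \<tau>" "\<tau> \<le> t" for \<tau>
  proof -
    from sol that sub have "(y has_vector_derivative F (y \<tau>)) (at \<tau> within I)"
      unfolding solution_on_def by auto
    then have "(y has_vector_derivative F (y \<tau>)) (at \<tau> within {s..t})"
      using has_vector_derivative_within_subset sub by blast
    from has_real_derivative_GDERIV_compose[OF grad this]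
    show ?thesis by (simp add: has_field_derivative_def)
  qed
  from mvt_very_simple[OF \<open>s \<le> t\<close> this] obtain \<tau> where
    "V (y t) - V (y s) = (DV (y \<tau>) \<bullet> F (y \<tau>)) * (t - s)" by blast
  with decr[of "y \<tau>"] \<open>s \<le> t\<close> show ?thesis
    by (metis diff_ge_0_iff_ge diff_le_0_iff_le mult_nonpos_nonneg)
qed

lemma continuous_on_if_GDERIV:
  "(\<And>w. GDERIV V w :> DV w) \<Longrightarrow> continuous_on S V"
  unfolding gderiv_def by (meson continuous_at_imp_continuous_on has_derivative_continuous)

lemma lyapunov_solution_stays_in_ball:
  assumes grad: "\<And>w. GDERIV V w :> DV w" and decr: "\<And>w. DV w \<bullet> F w \<le> 0"
    and sol: "solution_on F y {0..T}" and start: "dist (y 0) e < \<rho>"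
    and sphere: "\<And>w. dist w e = \<rho> \<Longrightarrow> V (y 0) < V w" and "t \<in> {0..T}"
  shows "dist (y t) e < \<rho>"
proof (rule ccontr)
  assume "\<not> dist (y t) e < \<rho>"
  moreover have "continuous_on {0..t} (\<lambda>\<tau>. dist (y \<tau>) e)"
    using \<open>t \<in> {0..T}\<close>
    by (intro continuous_intros continuous_on_subset[OF solution_on_continuous[OF sol]]) auto
  ultimately obtain s where s: "0 \<le> s" "s \<le> t" "dist (y s) e = \<rho>"
    using IVT'[of "\<lambda>\<tau>. dist (y \<tau>) e" 0 \<rho> t] start \<open>t \<in> {0..T}\<close> by auto
  then have "V (y 0) < V (y s)"
    using sphere by blast
  moreover have "V (y s) \<le> V (y 0)"
    using s \<open>t \<in> {0..T}\<close> by (intro lyapunov_nonincreasing[OF grad decr sol]) (auto simp: is_interval_cc)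
  ultimately show False
    by simp
qed

lemma lyap_stable_if_strict_local_min:
  fixes F :: "'a::euclidean_space \<Rightarrow> 'a"
  assumes "F e = 0"
    and grad: "\<And>w. GDERIV V w :> DV w" and decr: "\<And>w. DV w \<bullet> F w \<le> 0"
    and min: "\<exists>r>0. \<forall>w. w \<noteq> e \<longrightarrow> dist w e < r \<longrightarrow> V e < V w"
  shows "lyap_stable F e"
  unfolding lyap_stable_def
proof (intro conjI allI impI)
  show "F e = 0" by fact
  fix \<epsilon> :: real assume "\<epsilon> > 0"
  obtain r where "r > 0" and r: "\<And>w. w \<noteq> e \<Longrightarrow> dist w e < r \<Longrightarrow> V e < V w"
    using min by blast
  define \<rho> where "\<rho> = min \<epsilon> r / 2"
  have \<rho>: "0 < \<rho>" "\<rho> < \<epsilon>" "\<rho> < r"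
    using \<open>r > 0\<close> \<open>\<epsilon> > 0\<close> by (auto simp: \<rho>_def)
  have V_cont: "continuous_on UNIV V"
    using grad by (rule continuous_on_if_GDERIV)
  have "sphere e \<rho> \<noteq> {}"
    using \<rho>(1) by simp
  then obtain p where p: "p \<in> sphere e \<rho>" and p_min: "\<And>w. w \<in> sphere e \<rho> \<Longrightarrow> V p \<le> V w"
    using continuous_attains_inf[OF compact_sphere _ continuous_on_subset[OF V_cont]] by blast
  have "V e < V p"
    using p \<rho> by (intro r) (auto simp: dist_commute)
  then obtain \<delta> where "\<delta> > 0" and \<delta>: "\<And>w. dist w e < \<delta> \<Longrightarrow> dist (V w) (V e) < V p - V e"
    using V_cont unfolding continuous_on_iff by (metis UNIV_I diff_gt_0_iff_gt)
  then have \<delta>: "\<And>w. dist w e < \<delta> \<Longrightarrow> V w < V p"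
    by (fastforce simp: dist_real_def)
  show "\<exists>\<delta>>0. \<forall>y T. solution_on F y {0..T} \<longrightarrow> dist (y 0) e < \<delta> \<longrightarrow> (\<forall>t\<in>{0..T}. dist (y t) e < \<epsilon>)"
  proof (intro exI[of _ "min \<delta> \<rho>"] conjI allI impI ballI)
    show "min \<delta> \<rho> > 0" using \<open>\<delta> > 0\<close> \<rho> by simp
    fix y T t assume sol: "solution_on F y {0..T}" and y0: "dist (y 0) e < min \<delta> \<rho>"
      and "t \<in> {0..T}"
    have "V (y 0) < V w" if "dist w e = \<rho>" for w
    proof -
      have "V (y 0) < V p"
        using y0 by (intro \<delta>) simp
      also have "V p \<le> V w"
        using that by (intro p_min) (simp add: dist_commute)
      finally show ?thesis .
    qed
    then have "dist (y t) e < \<rho>"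
      using lyapunov_solution_stays_in_ball[OF grad decr sol _ _ \<open>t \<in> {0..T}\<close>] y0 by simp
    then show "dist (y t) e < \<epsilon>" using \<rho> by simp
  qed
qed

section \<open>Convergence of bounded solutions\<close>

lemma Cauchy_if_uniformly_approximable:
  fixes f :: "nat \<Rightarrow> 'a::metric_space"
  assumes "\<And>\<epsilon>. \<epsilon> > 0 \<Longrightarrow> \<exists>g. Cauchy g \<and> (\<forall>n. dist (f n) (g n) < \<epsilon>)"
  shows "Cauchy f"
proof (rule metric_CauchyI)
  fix \<epsilon> :: real assume "\<epsilon> > 0"
  then have "\<epsilon> / 3 > 0"
    by simp
  then obtain g where "Cauchy g" and g: "\<And>n. dist (f n) (g n) < \<epsilon> / 3"
    using assms by metis
  obtain M where M: "\<And>m n. m \<ge> M \<Longrightarrow> n \<ge> M \<Longrightarrow> dist (g m) (g n) < \<epsilon> / 3"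
    using metric_CauchyD[OF \<open>Cauchy g\<close> \<open>\<epsilon> / 3 > 0\<close>] by blast
  show "\<exists>M. \<forall>m\<ge>M. \<forall>n\<ge>M. dist (f m) (f n) < \<epsilon>"
  proof (intro exI[of _ M] allI impI)
    fix m n assume "m \<ge> M" "n \<ge> M"
    have "dist (g n) (f n) < \<epsilon> / 3"
      using g[of n] by (simp add: dist_commute)
    with g[of m] M[OF \<open>m \<ge> M\<close> \<open>n \<ge> M\<close>] show "dist (f m) (f n) < \<epsilon>"
      by (rule dist_triangle_third)
  qed
qed

lemma lipschitz_translates_convergent_subseq:
  fixes y :: "real \<Rightarrow> 'a::euclidean_space"
  assumes bounded: "\<And>t. t \<ge> 0 \<Longrightarrow> norm (y t) \<le> B"
    and lipschitz: "\<And>s t. s \<ge> 0 \<Longrightarrow> t \<ge> 0 \<Longrightarrow> dist (y s) (y t) \<le> L * dist s t"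
    and "L \<ge> 0"
  obtains k where "strict_mono k" "\<And>t. t \<ge> 0 \<Longrightarrow> convergent (\<lambda>n. y (real (k n) + t))"
proof -
  have "countable {q \<in> \<rat>. q \<ge> (0::real)}"
    by (rule countable_subset[OF _ countable_rat]) auto
  then obtain k where k: "strict_mono k"
    and conv_rat: "\<And>q. q \<in> {q \<in> \<rat>. q \<ge> 0} \<Longrightarrow> \<exists>l. (\<lambda>n. y (real (k n) + q)) \<longlonglongrightarrow> l"
  proof (rule function_convergent_subsequence[of _ "\<lambda>n q. y (real n + q)" B])
    show "norm (y (real n + q)) \<le> B" if "q \<in> {q \<in> \<rat>. q \<ge> 0}" for n q
      using that by (intro bounded) simp
  qed blast
  \<comment> \<open>By the Lipschitz bound, the translates at t are uniformly close to those at a nearby rational time.\<close>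
  have "Cauchy (\<lambda>n. y (real (k n) + t))" if "t \<ge> 0" for t
  proof (rule Cauchy_if_uniformly_approximable)
    fix \<epsilon> :: real assume "\<epsilon> > 0"
    then have "\<epsilon> / (L + 1) > 0"
      using \<open>L \<ge> 0\<close> by simp
    then obtain q where q: "q \<in> \<rat>" "t < q" "q < t + \<epsilon> / (L + 1)"
      using Rats_dense_in_real[of t "t + \<epsilon> / (L + 1)"] by auto
    have close: "dist (y (real (k n) + t)) (y (real (k n) + q)) < \<epsilon>" for n
    proof -
      have "dist (y (real (k n) + t)) (y (real (k n) + q)) \<le> L * dist t q"
        using lipschitz[of "real (k n) + t" "real (k n) + q"] q \<open>t \<ge> 0\<close> by (simp add: dist_real_def)
      also have "\<dots> \<le> L * (\<epsilon> / (L + 1))"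
        using q \<open>L \<ge> 0\<close> by (intro mult_left_mono) (auto simp: dist_real_def)
      also have "\<dots> < \<epsilon>"
        using \<open>L \<ge> 0\<close> \<open>\<epsilon> > 0\<close> by (simp add: field_simps)
      finally show ?thesis .
    qed
    obtain l where "(\<lambda>n. y (real (k n) + q)) \<longlonglongrightarrow> l"
      using conv_rat q \<open>t \<ge> 0\<close> by fastforce
    then have "Cauchy (\<lambda>n. y (real (k n) + q))"
      by (rule LIMSEQ_imp_Cauchy)
    with close show "\<exists>g. Cauchy g \<and> (\<forall>n. dist (y (real (k n) + t)) (g n) < \<epsilon>)"
      by (intro exI[of _ "\<lambda>n. y (real (k n) + q)"]) simp
  qed
  with k that show ?thesis
    using Cauchy_convergent_iff by blast
qed

lemma bounded_solution_lipschitz: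
  fixes F :: "'a::euclidean_space \<Rightarrow> 'a"
  assumes F_cont: "continuous_on UNIV F" and sol: "solution_on F y {0..}"
    and bounded: "\<And>t. t \<ge> 0 \<Longrightarrow> norm (y t) \<le> B"
  obtains L where "L > 0" "\<And>s t. s \<ge> 0 \<Longrightarrow> t \<ge> 0 \<Longrightarrow> dist (y s) (y t) \<le> L * dist s t"
proof -
  have "bounded (F ` cball 0 B)"
    by (intro compact_imp_bounded compact_continuous_image continuous_on_subset[OF F_cont]) auto
  then obtain L where "L > 0" and L: "\<And>w. w \<in> cball 0 B \<Longrightarrow> norm (F w) \<le> L"
    unfolding bounded_pos by blast
  have "dist (y s) (y t) \<le> L * dist s t" if "s \<ge> 0" "t \<ge> 0" for s t
    using that bounded L by (intro solution_on_lipschitz[OF sol]) auto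
  with \<open>L > 0\<close> show ?thesis
    by (rule that)
qed

lemma bounded_solution_uniform_linearization:
  fixes F :: "'a::euclidean_space \<Rightarrow> 'a"
  assumes F_cont: "continuous_on UNIV F" and sol: "solution_on F y {0..}"
    and bounded: "\<And>t. t \<ge> 0 \<Longrightarrow> norm (y t) \<le> B" and "\<epsilon> > 0"
  obtains d where "d > 0" "\<And>t s. t \<ge> 0 \<Longrightarrow> s \<ge> 0 \<Longrightarrow> \<bar>s - t\<bar> < d \<Longrightarrow>
    norm (y s - y t - (s - t) *\<^sub>R F (y t)) \<le> \<bar>s - t\<bar> * \<epsilon>"
proof -
  obtain L where "L > 0"
    and lipschitz: "\<And>s t. s \<ge> 0 \<Longrightarrow> t \<ge> 0 \<Longrightarrow> dist (y s) (y t) \<le> L * dist s t"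
    using bounded_solution_lipschitz[OF F_cont sol bounded] by blast
  have "uniformly_continuous_on (cball 0 B) F"
    by (intro compact_uniformly_continuous continuous_on_subset[OF F_cont]) auto
  then obtain d0 where "d0 > 0" and d0: "\<And>w w'. w \<in> cball 0 B \<Longrightarrow> w' \<in> cball 0 B \<Longrightarrow>
      dist w' w < d0 \<Longrightarrow> dist (F w') (F w) < \<epsilon>"
    using uniformly_continuous_onE[OF _ \<open>\<epsilon> > 0\<close>] by blast
  have "d0 / L > 0"
    using \<open>d0 > 0\<close> \<open>L > 0\<close> by simp
  moreover have "norm (y s - y t - (s - t) *\<^sub>R F (y t)) \<le> \<bar>s - t\<bar> * \<epsilon>"
    if "t \<ge> 0" "s \<ge> 0" "\<bar>s - t\<bar> < d0 / L" for t s
  proof (rule vector_differentiable_bound_linearization[of "closed_segment t s", simplified])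
    fix \<tau> assume \<tau>: "\<tau> \<in> closed_segment t s"
    have seg: "closed_segment t s \<subseteq> {0..}"
      using that by (auto simp: closed_segment_eq_real_ivl split: if_splits)
    with \<tau> sol show "(y has_vector_derivative F (y \<tau>)) (at \<tau> within closed_segment t s)"
      unfolding solution_on_def by (meson has_vector_derivative_within_subset subsetD)
    from \<tau> seg have "\<tau> \<ge> 0" "\<bar>\<tau> - t\<bar> \<le> \<bar>s - t\<bar>"
      by (auto simp: closed_segment_eq_real_ivl split: if_splits)
    have "dist (y \<tau>) (y t) \<le> L * \<bar>s - t\<bar>"
      using \<open>\<bar>\<tau> - t\<bar> \<le> \<bar>s - t\<bar>\<close> \<open>L > 0\<close>
      by (intro order_trans[OF lipschitz[OF \<open>\<tau> \<ge> 0\<close> \<open>t \<ge> 0\<close>]] mult_left_mono) (auto simp: dist_real_def)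
    also have "\<dots> < d0"
      using that \<open>L > 0\<close> by (simp add: field_simps)
    finally have "dist (y \<tau>) (y t) < d0" .
    then show "norm (F (y \<tau>) - F (y t)) \<le> \<epsilon>"
      using d0[of "y t" "y \<tau>"] bounded[OF \<open>t \<ge> 0\<close>] bounded[OF \<open>\<tau> \<ge> 0\<close>] by (simp add: dist_norm)
  qed auto
  ultimately show ?thesis
    by (rule that)
qed

lemma solution_on_limit_of_translates:
  fixes F :: "'a::euclidean_space \<Rightarrow> 'a"
  assumes F_cont: "continuous_on UNIV F" and sol: "solution_on F y {0..}"
    and bounded: "\<And>t. t \<ge> 0 \<Longrightarrow> norm (y t) \<le> B"
    and shifts: "\<And>n. c n \<ge> 0"
    and lim: "\<And>t. t \<ge> 0 \<Longrightarrow> (\<lambda>n. y (c n + t)) \<longlonglongrightarrow> z t"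
  shows "solution_on F z {0..}"
  unfolding solution_on_def has_vector_derivative_def
proof
  fix t :: real assume "t \<in> {0..}"
  then have "t \<ge> 0" by simp
  have FZ: "(\<lambda>n. F (y (c n + t))) \<longlonglongrightarrow> F (z t)"
    using F_cont \<open>t \<ge> 0\<close> by (intro isCont_tendsto_compose[OF _ lim]) (auto simp: continuous_on_eq_continuous_at)
  show "(z has_derivative (\<lambda>h. h *\<^sub>R F (z t))) (at t within {0..})"
    unfolding has_derivative_within_alt
  proof (intro conjI allI impI bounded_linear_scaleR_left)
    fix \<epsilon> :: real assume "\<epsilon> > 0"
    then obtain d where "d > 0" and d: "\<And>t s. t \<ge> 0 \<Longrightarrow> s \<ge> 0 \<Longrightarrow> \<bar>s - t\<bar> < d \<Longrightarrow>
        norm (y s - y t - (s - t) *\<^sub>R F (y t)) \<le> \<bar>s - t\<bar> * \<epsilon>"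
      using bounded_solution_uniform_linearization[OF F_cont sol bounded] by blast
    show "\<exists>d>0. \<forall>s\<in>{0..}. norm (s - t) < d \<longrightarrow> norm (z s - z t - (s - t) *\<^sub>R F (z t)) \<le> \<epsilon> * norm (s - t)"
    proof (intro exI[of _ d] conjI ballI impI \<open>d > 0\<close>)
      fix s :: real assume "s \<in> {0..}" "norm (s - t) < d"
      then have "s \<ge> 0" "\<bar>s - t\<bar> < d" by auto
      have "(\<lambda>n. y (c n + s) - y (c n + t) - (s - t) *\<^sub>R F (y (c n + t)))
          \<longlonglongrightarrow> z s - z t - (s - t) *\<^sub>R F (z t)"
        using \<open>s \<ge> 0\<close> \<open>t \<ge> 0\<close> by (intro tendsto_intros lim FZ)
      moreover have "norm (y (c n + s) - y (c n + t) - (s - t) *\<^sub>R F (y (c n + t))) \<le> \<bar>s - t\<bar> * \<epsilon>" for n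
        using d[of "c n + t" "c n + s"] shifts[of n] \<open>s \<ge> 0\<close> \<open>t \<ge> 0\<close> \<open>\<bar>s - t\<bar> < d\<close> by simp
      ultimately have "norm (z s - z t - (s - t) *\<^sub>R F (z t)) \<le> \<bar>s - t\<bar> * \<epsilon>"
        by (intro Lim_norm_ubound[of sequentially]) auto
      then show "norm (z s - z t - (s - t) *\<^sub>R F (z t)) \<le> \<epsilon> * norm (s - t)"
        by (simp add: mult.commute)
    qed
  qed
qed

lemma nonincreasing_tendsto_Inf:
  fixes f :: "real \<Rightarrow> real"
  assumes bdd: "bdd_below (f ` {0..})" and mono: "\<And>s t. 0 \<le> s \<Longrightarrow> s \<le> t \<Longrightarrow> f t \<le> f s"
  shows "(f \<longlongrightarrow> Inf (f ` {0..})) at_top"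
proof (rule decreasing_tendsto)
  show "\<forall>\<^sub>F t in at_top. Inf (f ` {0..}) \<le> f t"
    unfolding eventually_at_top_linorder using bdd by (auto intro!: cInf_lower)
  fix x assume "Inf (f ` {0..}) < x"
  then have "\<exists>v\<in>f ` {0..}. v < x"
    using cInf_less_iff[OF _ bdd] by blast
  then obtain t0 where "t0 \<ge> 0" "f t0 < x"
    by auto
  then have "f t < x" if "t \<ge> t0" for t
    using mono[of t0 t] that by simp
  then show "\<forall>\<^sub>F t in at_top. f t < x"
    unfolding eventually_at_top_linorder by blast
qed

lemma orbital_derivative_eq_0_if_constant:
  assumes grad: "\<And>w. GDERIV V w :> DV w" and sol: "solution_on F z {0..}"
    and const: "\<And>t. t \<ge> 0 \<Longrightarrow> V (z t) = c" and "t \<ge> 0"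
  shows "DV (z t) \<bullet> F (z t) = 0"
proof -
  have "((\<lambda>t. V (z t)) has_real_derivative DV (z t) \<bullet> F (z t)) (at t within {0..})"
    using sol \<open>t \<ge> 0\<close> unfolding solution_on_def by (intro has_real_derivative_GDERIV_compose[OF grad]) auto
  moreover have "((\<lambda>t. V (z t)) has_real_derivative 0) (at t within {0..})"
    by (rule has_field_derivative_transform_within[OF DERIV_const zero_less_one]) (use \<open>t \<ge> 0\<close> const in auto)
  moreover have "t islimpt {0..t + 1}"
    using \<open>t \<ge> 0\<close> by simp
  then have "at t within {0..} \<noteq> bot"
    by (auto simp: trivial_limit_within intro: islimpt_subset)
  ultimately show ?thesis
    by (rule has_field_derivative_unique)
qed

lemma lyap_stable_tendsto_if_approaches:
  assumes stable: "lyap_stable F e" and sol: "solution_on F y {0..}"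
    and approaches: "\<And>\<delta>. \<delta> > 0 \<Longrightarrow> \<exists>s\<ge>0. dist (y s) e < \<delta>"
  shows "(y \<longlongrightarrow> e) at_top"
  unfolding tendsto_iff eventually_at_top_linorder
proof (intro allI impI)
  fix \<epsilon> :: real assume "\<epsilon> > 0"
  then obtain \<delta> where "\<delta> > 0" and \<delta>: "\<And>y T. solution_on F y {0..T} \<Longrightarrow> dist (y 0) e < \<delta> \<Longrightarrow>
      \<forall>t\<in>{0..T}. dist (y t) e < \<epsilon>"
    using stable unfolding lyap_stable_def by blast
  then obtain s0 where "s0 \<ge> 0" "dist (y s0) e < \<delta>"
    using approaches by blast
  show "\<exists>N. \<forall>s\<ge>N. dist (y s) e < \<epsilon>"
  proof (intro exI[of _ s0] allI impI)
    fix s assume "s \<ge> s0"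
    have shifted: "solution_on F (\<lambda>t. y (s0 + t)) {0..s - s0}"
      by (rule solution_on_subset[OF solution_on_shift[OF sol \<open>s0 \<ge> 0\<close>]]) auto
    have "\<forall>t\<in>{0..s - s0}. dist (y (s0 + t)) e < \<epsilon>"
      using \<delta>[OF shifted] \<open>dist (y s0) e < \<delta>\<close> by simp
    from this[rule_format, of "s - s0"] \<open>s \<ge> s0\<close> show "dist (y s) e < \<epsilon>"
      by simp
  qed
qed

lemma lyapunov_constant_on_limit_of_translates:
  fixes F :: "'a::euclidean_space \<Rightarrow> 'a"
  assumes grad: "\<And>w. GDERIV V w :> DV w" and decr: "\<And>w. DV w \<bullet> F w \<le> 0"
    and sol: "solution_on F y {0..}" and bounded: "\<And>t. t \<ge> 0 \<Longrightarrow> norm (y t) \<le> B"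
    and k: "strict_mono k" and lim: "\<And>t. t \<ge> 0 \<Longrightarrow> (\<lambda>n. y (real (k n) + t)) \<longlonglongrightarrow> z t"
  obtains c where "\<And>t. t \<ge> 0 \<Longrightarrow> V (z t) = c"
proof -
  define c where "c = Inf ((\<lambda>t. V (y t)) ` {0..})"
  have V_cont: "continuous_on UNIV V"
    using grad by (rule continuous_on_if_GDERIV)
  have "bounded (V ` cball 0 B)"
    by (intro compact_imp_bounded compact_continuous_image continuous_on_subset[OF V_cont]) auto
  moreover have "(\<lambda>t. V (y t)) ` {0..} \<subseteq> V ` cball 0 B"
    using bounded by auto
  ultimately have "bdd_below ((\<lambda>t. V (y t)) ` {0..})"
    by (meson bdd_below_mono bounded_imp_bdd_below)
  then have "((\<lambda>t. V (y t)) \<longlongrightarrow> c) at_top"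
    unfolding c_def
  proof (rule nonincreasing_tendsto_Inf)
    show "V (y t) \<le> V (y s)" if "0 \<le> s" "s \<le> t" for s t
      using that by (intro lyapunov_nonincreasing[OF grad decr sol]) (auto simp: is_interval_ci)
  qed
  moreover have "filterlim (\<lambda>n. real (k n) + t) at_top sequentially" for t
  proof -
    have "filterlim (\<lambda>n. t + real (k n)) at_top sequentially"
      using filterlim_compose[OF filterlim_real_sequentially filterlim_subseq[OF k]]
      by (rule filterlim_tendsto_add_at_top[OF tendsto_const])
    then show ?thesis
      by (simp add: add.commute)
  qed
  ultimately have V_lim: "(\<lambda>n. V (y (real (k n) + t))) \<longlonglongrightarrow> c" for t
    by (rule filterlim_compose)
  have "(\<lambda>n. V (y (real (k n) + t))) \<longlonglongrightarrow> V (z t)" if "t \<ge> 0" for t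
    using V_cont by (intro isCont_tendsto_compose[OF _ lim[OF that]]) (auto simp: continuous_on_eq_continuous_at)
  then have "V (z t) = c" if "t \<ge> 0" for t
    using LIMSEQ_unique[OF _ V_lim] that by blast
  then show ?thesis
    by (rule that)
qed

lemma approaches_if_translates_tendsto:
  fixes c :: "nat \<Rightarrow> real"
  assumes lim: "\<And>t. t \<ge> 0 \<Longrightarrow> (\<lambda>n. y (c n + t)) \<longlonglongrightarrow> z t" and shifts: "\<And>n. c n \<ge> 0"
    and z_lim: "(z \<longlongrightarrow> e) at_top" and "\<delta> > 0"
  shows "\<exists>s\<ge>0. dist (y s) e < \<delta>"
proof -
  have "\<forall>\<^sub>F t in at_top. dist (z t) e < \<delta> / 2"
    using z_lim \<open>\<delta> > 0\<close> half_gt_zero unfolding tendsto_iff by blast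
  then obtain T0 where "\<And>t. t \<ge> T0 \<Longrightarrow> dist (z t) e < \<delta> / 2"
    unfolding eventually_at_top_linorder by blast
  then obtain T where "T \<ge> 0" and T: "dist (z T) e < \<delta> / 2"
    by (meson max.cobounded1 max.cobounded2)
  have "\<forall>\<^sub>F n in sequentially. dist (y (c n + T)) (z T) < \<delta> / 2"
    using lim[OF \<open>T \<ge> 0\<close>] \<open>\<delta> > 0\<close> half_gt_zero unfolding tendsto_iff by blast
  then obtain n where "dist (y (c n + T)) (z T) < \<delta> / 2"
    unfolding eventually_sequentially by blast
  then have "dist (y (c n + T)) e < \<delta>"
    using T dist_triangle_half_l[of "y (c n + T)" "z T" \<delta> e] by (simp add: dist_commute)
  then show ?thesis
    using \<open>T \<ge> 0\<close> shifts[of n] by (intro exI[of _ "c n + T"]) simp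
qed

lemma bounded_solution_tendsto_if_detectable:
  fixes F :: "'a::euclidean_space \<Rightarrow> 'a"
  assumes F_cont: "continuous_on UNIV F"
    and grad: "\<And>w. GDERIV V w :> DV w" and decr: "\<And>w. DV w \<bullet> F w \<le> 0"
    and zero_output: "\<And>w. DV w \<bullet> F w = 0 \<Longrightarrow> Y w = 0" and det: "detectable F Y e"
    and stable: "lyap_stable F e"
    and sol: "solution_on F y {0..}" and bounded: "\<And>t. t \<ge> 0 \<Longrightarrow> norm (y t) \<le> B"
  shows "(y \<longlongrightarrow> e) at_top"
proof -
  obtain L where "L > 0" and "\<And>s t. s \<ge> 0 \<Longrightarrow> t \<ge> 0 \<Longrightarrow> dist (y s) (y t) \<le> L * dist s t"
    using bounded_solution_lipschitz[OF F_cont sol bounded] by blast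
  then obtain k where k: "strict_mono k" and "\<And>t. t \<ge> 0 \<Longrightarrow> convergent (\<lambda>n. y (real (k n) + t))"
    using lipschitz_translates_convergent_subseq[of y B L] bounded by auto
  then obtain z where z: "\<And>t. t \<ge> 0 \<Longrightarrow> (\<lambda>n. y (real (k n) + t)) \<longlonglongrightarrow> z t"
    unfolding convergent_def by metis
  have z_sol: "solution_on F z {0..}"
    using solution_on_limit_of_translates[OF F_cont sol bounded _ z] by simp
  obtain c where "\<And>t. t \<ge> 0 \<Longrightarrow> V (z t) = c"
    using lyapunov_constant_on_limit_of_translates[OF grad decr sol bounded k z] by blast
  then have "Y (z t) = 0" if "t \<ge> 0" for t
    by (rule zero_output[OF orbital_derivative_eq_0_if_constant[OF grad z_sol _ that]])
  with det z_sol have "(z \<longlongrightarrow> e) at_top"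
    unfolding detectable_def by blast
  then show ?thesis
    using approaches_if_translates_tendsto[OF z] by (intro lyap_stable_tendsto_if_approaches[OF stable sol]) auto
qed

lemma asym_stable_if_lyapunov_detectable:
  fixes F :: "'a::euclidean_space \<Rightarrow> 'a"
  assumes F_cont: "continuous_on UNIV F"
    and grad: "\<And>w. GDERIV V w :> DV w" and decr: "\<And>w. DV w \<bullet> F w \<le> 0"
    and zero_output: "\<And>w. DV w \<bullet> F w = 0 \<Longrightarrow> Y w = 0" and det: "detectable F Y e"
    and stable: "lyap_stable F e"
  shows "asym_stable F e"
  unfolding asym_stable_def
proof (intro conjI stable)
  obtain \<delta> where "\<delta> > 0" and \<delta>: "\<And>y T. solution_on F y {0..T} \<Longrightarrow> dist (y 0) e < \<delta> \<Longrightarrow>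
      \<forall>t\<in>{0..T}. dist (y t) e < 1"
    using stable unfolding lyap_stable_def by (meson zero_less_one)
  show "\<exists>\<delta>>0. \<forall>y. solution_on F y {0..} \<longrightarrow> dist (y 0) e < \<delta> \<longrightarrow> (y \<longlongrightarrow> e) at_top"
  proof (intro exI[of _ \<delta>] conjI allI impI \<open>\<delta> > 0\<close>)
    fix y assume sol: "solution_on F y {0..}" and "dist (y 0) e < \<delta>"
    have bounded: "norm (y t) \<le> norm e + 1" if "t \<ge> 0" for t
    proof -
      have "dist (y t) e < 1"
        using \<delta>[OF solution_on_subset[OF sol] \<open>dist (y 0) e < \<delta>\<close>, of t] that by auto
      then show ?thesis
        using norm_triangle_ineq2[of "y t" e] by (simp add: dist_norm)
    qed
    show "(y \<longlongrightarrow> e) at_top"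
      using bounded_solution_tendsto_if_detectable[OF F_cont grad decr zero_output det stable sol bounded] .
  qed
qed

lemma glob_stable_if_sublevels_bounded:
  fixes F :: "'a::euclidean_space \<Rightarrow> 'a"
  assumes grad: "\<And>w. GDERIV V w :> DV w" and decr: "\<And>w. DV w \<bullet> F w \<le> 0"
    and stable: "lyap_stable F e"
    and sublevels: "\<And>M. \<exists>R. \<forall>w. V w \<le> M \<longrightarrow> norm w \<le> R"
  shows "glob_stable F e"
  unfolding glob_stable_def
proof (intro conjI stable allI)
  fix r :: real
  have "bounded (V ` cball e r)"
    by (intro compact_imp_bounded compact_continuous_image continuous_on_if_GDERIV[OF grad] compact_cball)
  then obtain M where M: "\<And>v. v \<in> V ` cball e r \<Longrightarrow> norm v \<le> M"
    unfolding bounded_iff by blast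
  obtain R where R: "\<And>w. V w \<le> M \<Longrightarrow> norm w \<le> R"
    using sublevels by blast
  show "\<exists>B. \<forall>y T. solution_on F y {0..T} \<longrightarrow> dist (y 0) e < r \<longrightarrow> (\<forall>t\<in>{0..T}. dist (y t) e < B)"
  proof (intro exI[of _ "R + norm e + 1"] allI impI ballI)
    fix y T t assume sol: "solution_on F y {0..T}" and "dist (y 0) e < r" and "t \<in> {0..T}"
    then have "V (y t) \<le> V (y 0)"
      by (intro lyapunov_nonincreasing[OF grad decr sol]) (auto simp: is_interval_cc)
    also have "V (y 0) \<le> M"
      using \<open>dist (y 0) e < r\<close> M[of "V (y 0)"] by (simp add: dist_commute abs_le_iff)
    finally have "norm (y t) \<le> R"
      by (rule R)
    then show "dist (y t) e < R + norm e + 1"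
      using norm_triangle_ineq4[of "y t" e] by (simp add: dist_norm)
  qed
qed

lemma glob_asym_stable_if_sublevels_bounded:
  fixes F :: "'a::euclidean_space \<Rightarrow> 'a"
  assumes F_cont: "continuous_on UNIV F"
    and grad: "\<And>w. GDERIV V w :> DV w" and decr: "\<And>w. DV w \<bullet> F w \<le> 0"
    and zero_output: "\<And>w. DV w \<bullet> F w = 0 \<Longrightarrow> Y w = 0" and det: "detectable F Y e"
    and stable: "lyap_stable F e"
    and sublevels: "\<And>M. \<exists>R. \<forall>w. V w \<le> M \<longrightarrow> norm w \<le> R"
  shows "glob_asym_stable F e"
  unfolding glob_asym_stable_def
proof (intro conjI stable allI impI)
  fix y assume sol: "solution_on F y {0..}"
  obtain R where R: "\<And>w. V w \<le> V (y 0) \<Longrightarrow> norm w \<le> R"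
    using sublevels by blast
  have bounded: "norm (y t) \<le> R" if "t \<ge> 0" for t
    using that by (intro R lyapunov_nonincreasing[OF grad decr sol]) (auto simp: is_interval_ci)
  show "(y \<longlongrightarrow> e) at_top"
    using bounded_solution_tendsto_if_detectable[OF F_cont grad decr zero_output det stable sol bounded] .
qed

section \<open>Matrices and gradients\<close>

lemma matrix_vector_mult_uminus_left: "(- A) *v (x::real^'n) = - (A *v x)"
  by (simp add: matrix_vector_mult_def vec_eq_iff sum_negf)

lemma transpose_add: "transpose (A + B) = transpose A + transpose (B::real^'n^'m)"
  by (simp add: transpose_def vec_eq_iff)

lemma inner_matrix_vector_transpose: "a \<bullet> (A *v b) = (transpose A *v a) \<bullet> (b::real^'n)"
  by (simp add: dot_lmul_matrix)

lemma skew_quadratic_form_eq_0: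
  assumes "transpose A = - A" shows "x \<bullet> (A *v (x::real^'n)) = 0"
  using inner_matrix_vector_transpose[of x A x] assms
  by (simp add: matrix_vector_mult_uminus_left inner_commute)

lemma Jc1_minus_Rc1: "Jc1 G - Rc1 G = (G::real^'m^'m)"
  unfolding Jc1_def Rc1_def by (simp add: algebra_simps flip: scaleR_left_distrib)

lemma block_psd_lower_right:
  assumes "block_psd A B C" shows "0 \<le> v \<bullet> (C *v v)"
  using assms[unfolded block_psd_def, rule_format, of 0 v] by simp

lemma pos_def_quadratic_nonneg: "pos_def A \<Longrightarrow> 0 \<le> v \<bullet> (A *v v)"
  unfolding pos_def_def by (cases "v = 0") (auto intro: less_imp_le)

lemma pos_def_quadratic_lower_bound:
  fixes A :: "real^'n^'n"
  assumes "pos_def A"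
  obtains l where "l > 0" "\<And>v. l * (norm v)\<^sup>2 \<le> v \<bullet> (A *v v)"
proof -
  have "continuous_on (sphere 0 1) (\<lambda>v::real^'n. v \<bullet> (A *v v))"
    by (intro continuous_intros)
  moreover have "sphere (0::real^'n) 1 \<noteq> {}"
    by simp
  ultimately obtain p where p: "p \<in> sphere 0 1"
    and p_min: "\<And>u. u \<in> sphere 0 1 \<Longrightarrow> p \<bullet> (A *v p) \<le> u \<bullet> (A *v u)"
    using continuous_attains_inf[OF compact_sphere] by blast
  have "p \<noteq> 0"
    using p by auto
  then have "p \<bullet> (A *v p) > 0"
    using assms unfolding pos_def_def by blast
  moreover have "(p \<bullet> (A *v p)) * (norm v)\<^sup>2 \<le> v \<bullet> (A *v v)" for v
  proof (cases "v = 0")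
    case False
    define u where "u = (1 / norm v) *\<^sub>R v"
    have "v = norm v *\<^sub>R u"
      using False by (simp add: u_def)
    have "v \<bullet> (A *v v) = (norm v)\<^sup>2 * (u \<bullet> (A *v u))"
      by (subst (1 2) \<open>v = norm v *\<^sub>R u\<close>) (simp add: matrix_vector_mult_scaleR power2_eq_square)
    moreover have "p \<bullet> (A *v p) \<le> u \<bullet> (A *v u)"
      using False by (intro p_min) (simp add: u_def)
    ultimately show ?thesis
      using mult_right_mono[of "p \<bullet> (A *v p)" "u \<bullet> (A *v u)" "(norm v)\<^sup>2"] by (simp add: mult.commute)
  qed simp
  ultimately show ?thesis using that by blast
qed

lemma pos_def_matrix_inv_right:
  fixes A :: "real^'n^'n"
  assumes "pos_def A"
  shows "A *v (matrix_inv A *v v) = v"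
proof -
  have "inj ((*v) A)"
  proof (rule injI)
    fix a b assume "A *v a = A *v b"
    then have "(a - b) \<bullet> (A *v (a - b)) = 0"
      by (simp add: matrix_vector_mult_diff_distrib)
    then show "a = b"
      using assms unfolding pos_def_def by (metis less_irrefl right_minus_eq)
  qed
  then have "invertible A"
    using matrix_left_invertible_injective invertible_left_inverse by blast
  then have "A ** matrix_inv A = mat 1"
    unfolding invertible_def matrix_inv_def by (rule someI2_ex) blast
  then show ?thesis
    by (simp add: matrix_vector_mul_assoc)
qed

lemma grad_eqI:
  fixes f :: "'a::real_inner \<Rightarrow> real"
  assumes "GDERIV f x :> g" shows "grad f x = g"
  unfolding grad_def
proof (rule the_equality[where P = "\<lambda>g. GDERIV f x :> g", OF assms])
  fix g' assume "GDERIV f x :> g'"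
  then have "(\<lambda>h. h \<bullet> g') = (\<lambda>h. h \<bullet> g)"
    using assms unfolding gderiv_def by (rule has_derivative_unique)
  then have "(g' - g) \<bullet> (g' - g) = 0"
    by (metis inner_diff_left inner_diff_right right_minus_eq)
  then show "g' = g" by simp
qed

lemma grad_eq_sum_Basis:
  fixes f :: "'a::euclidean_space \<Rightarrow> real"
  assumes "f differentiable (at x)"
  shows "GDERIV f x :> (\<Sum>b\<in>Basis. frechet_derivative f (at x) b *\<^sub>R b)"
proof -
  let ?D = "frechet_derivative f (at x)"
  have "(f has_derivative ?D) (at x)"
    using assms frechet_derivative_works by blast
  moreover have "?D = (\<lambda>h. h \<bullet> (\<Sum>b\<in>Basis. ?D b *\<^sub>R b))"
  proof
    fix h :: 'a
    have "linear ?D"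
      using calculation has_derivative_linear by blast
    then have "?D h = (\<Sum>b\<in>Basis. (h \<bullet> b) * (?D b \<bullet> 1))"
      using Linear_Algebra.linear_componentwise[of ?D h 1] by simp
    then show "?D h = h \<bullet> (\<Sum>b\<in>Basis. ?D b *\<^sub>R b)"
      by (simp add: inner_sum_right mult.commute)
  qed
  ultimately show ?thesis
    unfolding gderiv_def by simp
qed

lemma GDERIV_grad:
  fixes f :: "'a::euclidean_space \<Rightarrow> real"
  assumes "f differentiable (at x)"
  shows "GDERIV f x :> grad f x"
  using grad_eq_sum_Basis[OF assms] by (simp add: grad_eqI[OF grad_eq_sum_Basis[OF assms]])

lemma smooth_imp_continuous_on: "smooth f \<Longrightarrow> continuous_on UNIV f"
  unfolding smooth_def by (metis Ck.simps(1))

lemma smooth_imp_C1: "smooth f \<Longrightarrow> Ck 1 f"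
  unfolding smooth_def by blast

lemma Ck_1_differentiable: "Ck 1 f \<Longrightarrow> f differentiable (at x)"
  by (metis Ck.simps(2) One_nat_def)

lemma continuous_on_grad:
  fixes f :: "'a::euclidean_space \<Rightarrow> real"
  assumes "Ck 1 f"
  shows "continuous_on UNIV (grad f)"
proof -
  have diff: "\<And>x. f differentiable (at x)"
    and cont: "\<And>v. continuous_on UNIV (\<lambda>x. frechet_derivative f (at x) v)"
    using assms by (simp_all add: One_nat_def)
  have "grad f = (\<lambda>x. \<Sum>b\<in>Basis. frechet_derivative f (at x) b *\<^sub>R b)"
    using grad_eqI[OF grad_eq_sum_Basis[OF diff]] by blast
  then show ?thesis
    by (auto intro!: continuous_on_sum continuous_on_scaleR cont continuous_on_const)
qed

lemma continuous_on_matrix_vector_mult: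
  fixes M :: "'a::topological_space \<Rightarrow> real^'n^'m"
  assumes "continuous_on S M" "continuous_on S v"
  shows "continuous_on S (\<lambda>x. M x *v v x)"
  unfolding matrix_vector_mult_def by (intro continuous_intros assms)

lemma continuous_on_transpose:
  fixes M :: "'a::topological_space \<Rightarrow> real^'n^'m"
  assumes "continuous_on S M"
  shows "continuous_on S (\<lambda>x. transpose (M x))"
  unfolding transpose_def by (intro continuous_intros assms)

section \<open>The closed loop\<close>

abbreviation plant_state :: "'a \<times> 'b \<times> 'c \<Rightarrow> 'a \<times> 'b" where
  "plant_state w \<equiv> (fst w, fst (snd w))"

lemma norm_le_plant_state:
  fixes w :: "'a::real_normed_vector \<times> 'b::real_normed_vector \<times> 'c::real_normed_vector"
  shows "norm w \<le> norm (plant_state w) + norm (snd (snd w))"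
proof -
  obtain a b c where "w = (a, b, c)"
    by (cases w) auto
  then have "norm w = norm (plant_state w, snd (snd w))"
    by (simp add: norm_Pair add.assoc)
  then show ?thesis
    using norm_Pair_le by metis
qed

lemma dist_plant_state_le:
  fixes w v :: "'a::metric_space \<times> 'b::metric_space \<times> 'c::metric_space"
  shows "dist (plant_state w) (plant_state v) \<le> dist w v"
proof -
  obtain a b c a' b' c' where "w = (a, b, c)" "v = (a', b', c')"
    by (cases w, cases v) auto
  then have "dist w v = dist (plant_state w, snd (snd w)) (plant_state v, snd (snd v))"
    by (simp add: dist_Pair_Pair add.assoc)
  then show ?thesis
    using dist_fst_le by (metis fst_conv)
qed

lemma closed_loop_w_eq:
  "closed_loop_w Jaa Jau Juu Raa Rau Ruu Gd da du Ki H w =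
    (let x = plant_state w; ga = grad_a H x; gu = grad_u H x; Y = ga + Ki *v snd (snd w) - da
     in (Gd x *v Y + (Jau x + Rau x) *v gu,
         (Juu x - Ruu x) *v gu - transpose (Jau x + Rau x) *v (ga + du),
         Gd x *v Y))"
proof -
  have gain: "- A + B + Jc1 G - Rc1 G = - A + B + G" for A B G :: "real^'m^'m"
    using Jc1_minus_Rc1[of G] by (simp add: algebra_simps)
  show ?thesis
    unfolding closed_loop_w_def plant_def ctrl_def ctrl_dyn_def Let_def gain Jc1_minus_Rc1
    by (simp add: algebra_simps matrix_vector_mult_uminus_left transpose_add scaleR_2)
qed

locale pH_closed_loop =
  fixes Jaa :: "(real^'m) \<times> (real^'s) \<Rightarrow> real^'m^'m"
    and Jau :: "(real^'m) \<times> (real^'s) \<Rightarrow> real^'s^'m"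
    and Juu :: "(real^'m) \<times> (real^'s) \<Rightarrow> real^'s^'s"
    and Raa :: "(real^'m) \<times> (real^'s) \<Rightarrow> real^'m^'m"
    and Rau :: "(real^'m) \<times> (real^'s) \<Rightarrow> real^'s^'m"
    and Ruu :: "(real^'m) \<times> (real^'s) \<Rightarrow> real^'s^'s"
    and Gd :: "(real^'m) \<times> (real^'s) \<Rightarrow> real^'m^'m"
    and H :: "(real^'m) \<times> (real^'s) \<Rightarrow> real"
    and da du :: "real^'m"
    and Ki :: "real^'m^'m"
    and xbar :: "(real^'m) \<times> (real^'s)"
  assumes H_C1: "Ck 1 H"
    and continuous_matrices: "continuous_on UNIV Jau" "continuous_on UNIV Juu"
      "continuous_on UNIV Rau" "continuous_on UNIV Ruu" "continuous_on UNIV Gd"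
    and Juu_skew: "\<And>x. transpose (Juu x) = - Juu x"
    and Ruu_psd: "\<And>x v. 0 \<le> v \<bullet> (Ruu x *v v)"
    and Gd_neg: "\<And>x. neg_def (Gd x)"
    and xbar_min: "\<And>x. H xbar + fst xbar \<bullet> du \<le> H x + fst x \<bullet> du"
    and xbar_isol: "\<exists>r>0. \<forall>x. x \<noteq> xbar \<longrightarrow> dist x xbar < r \<longrightarrow>
      H xbar + fst xbar \<bullet> du < H x + fst x \<bullet> du"
    and Ki_sym: "transpose Ki = Ki" and Ki_pd: "pos_def Ki"
begin

abbreviation "F \<equiv> closed_loop_w Jaa Jau Juu Raa Rau Ruu Gd da du Ki H"
abbreviation "HH \<equiv> \<lambda>x. H x + fst x \<bullet> du"
abbreviation "wcbar \<equiv> matrix_inv Ki *v (da + du)"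
abbreviation "wbar \<equiv> (fst xbar, snd xbar, wcbar)"
abbreviation "Yu \<equiv> \<lambda>w. grad_a HH (plant_state w) + Ki *v (snd (snd w) - wcbar)"

lemma Ki_wcbar: "Ki *v wcbar = da + du"
  using Ki_pd by (rule pos_def_matrix_inv_right)

lemma HH_has_gradient: "GDERIV HH x :> grad H x + (du, 0)"
proof -
  have "GDERIV H x :> grad H x"
    using GDERIV_grad[OF Ck_1_differentiable[OF H_C1]] .
  moreover have "GDERIV (\<lambda>x. fst x \<bullet> du) x :> (du, 0)"
    unfolding gderiv_def by (auto intro!: derivative_eq_intros simp: inner_commute)
  ultimately show ?thesis
    by (rule GDERIV_add)
qed

lemma grad_a_HH: "grad_a HH x = grad_a H x + du"
  and grad_u_HH: "grad_u HH x = grad_u H x"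
  unfolding grad_a_def grad_u_def grad_eqI[OF HH_has_gradient] by simp_all

lemma grad_HH_xbar: "grad_a H xbar = - du" "grad_u H xbar = 0"
proof -
  have "(\<lambda>h. h \<bullet> (grad H xbar + (du, 0))) = (\<lambda>h. 0)"
    using HH_has_gradient xbar_min unfolding gderiv_def
    by (intro differential_zero_maxmin[of xbar UNIV HH]) auto
  then have "grad H xbar + (du, 0) = 0"
    by (metis inner_eq_zero_iff)
  then show "grad_a H xbar = - du" "grad_u H xbar = 0"
    unfolding grad_a_def grad_u_def by (auto simp: prod_eq_iff eq_neg_iff_add_eq_0)
qed

lemma equilibrium: "F wbar = 0"
  using grad_HH_xbar Ki_wcbar by (simp add: closed_loop_w_eq Let_def zero_prod_def)

definition V :: "(real^'m) \<times> (real^'s) \<times> (real^'m) \<Rightarrow> real" where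
  "V w = HH (plant_state w) - HH xbar + ((snd (snd w) - wcbar) \<bullet> (Ki *v (snd (snd w) - wcbar))) / 2"

definition DV :: "(real^'m) \<times> (real^'s) \<times> (real^'m) \<Rightarrow> (real^'m) \<times> (real^'s) \<times> (real^'m)" where
  "DV w = (grad_a HH (plant_state w), grad_u HH (plant_state w), Ki *v (snd (snd w) - wcbar))"

lemma V_has_gradient: "GDERIV V w :> DV w"
proof -
  let ?x = "plant_state w" and ?p = "snd (snd w) - wcbar"
  have "(HH has_derivative (\<lambda>h. h \<bullet> grad HH ?x)) (at ?x)"
    using HH_has_gradient grad_eqI[OF HH_has_gradient] unfolding gderiv_def by simp
  then have HH: "((\<lambda>w. HH (plant_state w)) has_derivative (\<lambda>h. plant_state h \<bullet> grad HH ?x)) (at w)"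
    by (rule has_derivative_compose[rotated]) (auto intro!: derivative_eq_intros)
  have quad: "((\<lambda>w. (snd (snd w) - wcbar) \<bullet> (Ki *v (snd (snd w) - wcbar))) has_derivative
      (\<lambda>h. snd (snd h) \<bullet> (Ki *v ?p) + ?p \<bullet> (Ki *v snd (snd h)))) (at w)"
    by (auto intro!: derivative_eq_intros bounded_linear.has_derivative[OF matrix_vector_mul_bounded_linear])
  have "(V has_derivative (\<lambda>h. plant_state h \<bullet> grad HH ?x - 0
      + (snd (snd h) \<bullet> (Ki *v ?p) + ?p \<bullet> (Ki *v snd (snd h))) / 2)) (at w)"
    unfolding V_def[abs_def]
    by (intro has_derivative_add has_derivative_diff HH has_derivative_const
        bounded_linear.has_derivative[OF bounded_linear_divide quad])
  moreover have "(\<lambda>h. plant_state h \<bullet> grad HH ?x - 0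
      + (snd (snd h) \<bullet> (Ki *v ?p) + ?p \<bullet> (Ki *v snd (snd h))) / 2) = (\<lambda>h. h \<bullet> DV w)"
  proof
    fix h :: "(real^'m) \<times> (real^'s) \<times> (real^'m)"
    obtain h1 h2 h3 where h: "h = (h1, h2, h3)"
      by (cases h) auto
    have "?p \<bullet> (Ki *v h3) = h3 \<bullet> (Ki *v ?p)"
      using inner_matrix_vector_transpose[of ?p Ki h3] Ki_sym by (simp add: inner_commute)
    then show "plant_state h \<bullet> grad HH ?x - 0
        + (snd (snd h) \<bullet> (Ki *v ?p) + ?p \<bullet> (Ki *v snd (snd h))) / 2 = h \<bullet> DV w"
      unfolding h DV_def grad_a_def grad_u_def
      by (cases "grad HH ?x") (simp add: inner_Pair)
  qed
  ultimately show ?thesis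
    unfolding gderiv_def by simp
qed

lemma Yu_eq: "Yu w = grad_a H (plant_state w) + Ki *v snd (snd w) - da"
  using Ki_wcbar by (simp add: grad_a_HH matrix_vector_mult_diff_distrib algebra_simps)

lemma orbital_derivative:
  "DV w \<bullet> F w = Yu w \<bullet> (Gd (plant_state w) *v Yu w)
     - grad_u H (plant_state w) \<bullet> (Ruu (plant_state w) *v grad_u H (plant_state w))"
proof -
  let ?x = "plant_state w"
  let ?a = "grad_a H ?x + du" and ?gu = "grad_u H ?x" and ?M = "Jau ?x + Rau ?x"
    and ?q = "Ki *v (snd (snd w) - wcbar)" and ?G = "Gd ?x"
  have Y: "Yu w = ?a + ?q"
    by (simp add: grad_a_HH)
  have "F w = (?G *v Yu w + ?M *v ?gu, (Juu ?x - Ruu ?x) *v ?gu - transpose ?M *v ?a, ?G *v Yu w)"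
    unfolding closed_loop_w_eq Yu_eq by (simp add: Let_def)
  then have balance: "DV w \<bullet> F w = (?a + ?q) \<bullet> (?G *v Yu w) + (?a \<bullet> (?M *v ?gu) - ?gu \<bullet> (transpose ?M *v ?a))
      + ?gu \<bullet> (Juu ?x *v ?gu) - ?gu \<bullet> (Ruu ?x *v ?gu)"
    unfolding DV_def grad_a_HH grad_u_HH
    by (simp add: inner_add_left inner_add_right inner_diff_right matrix_vector_mult_diff_rdistrib)
  have "?a \<bullet> (?M *v ?gu) = ?gu \<bullet> (transpose ?M *v ?a)"
    unfolding inner_matrix_vector_transpose[of ?a] by (rule inner_commute)
  moreover have "?gu \<bullet> (Juu ?x *v ?gu) = 0"
    using Juu_skew by (rule skew_quadratic_form_eq_0)
  ultimately show ?thesis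
    using balance[folded Y] by linarith
qed

lemma orbital_derivative_neg: "Yu w \<noteq> 0 \<Longrightarrow> DV w \<bullet> F w < 0"
proof -
  let ?x = "plant_state w"
  assume "Yu w \<noteq> 0"
  then have "Yu w \<bullet> (Gd ?x *v Yu w) < 0"
    using Gd_neg unfolding neg_def_def by blast
  moreover have "0 \<le> grad_u H ?x \<bullet> (Ruu ?x *v grad_u H ?x)"
    by (rule Ruu_psd)
  ultimately show ?thesis
    unfolding orbital_derivative by linarith
qed

lemma orbital_derivative_nonpos: "DV w \<bullet> F w \<le> 0"
proof (cases "Yu w = 0")
  case True
  then show ?thesis
    using Ruu_psd by (simp add: orbital_derivative)
qed (simp add: orbital_derivative_neg less_imp_le)

lemma orbital_derivative_eq_0_imp: "DV w \<bullet> F w = 0 \<Longrightarrow> Yu w = 0"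
  using orbital_derivative_neg by fastforce

lemma continuous_F: "continuous_on UNIV F"
proof -
  have grads: "continuous_on UNIV (grad_a H)" "continuous_on UNIV (grad_u H)"
    unfolding grad_a_def[abs_def] grad_u_def[abs_def]
    by (intro continuous_on_fst continuous_on_snd continuous_on_grad[OF H_C1])+
  have plant: "continuous_on UNIV (\<lambda>w. f (plant_state w))" if "continuous_on UNIV f" for f :: "_ \<Rightarrow> 'b::topological_space"
    by (rule continuous_on_compose2[OF that]) (auto intro!: continuous_intros)
  show ?thesis
    unfolding closed_loop_w_eq[abs_def] Let_def
    by (intro continuous_intros continuous_on_matrix_vector_mult continuous_on_transpose
        plant grads continuous_matrices)
qed

lemma V_strict_local_min: "\<exists>r>0. \<forall>w. w \<noteq> wbar \<longrightarrow> dist w wbar < r \<longrightarrow> V wbar < V w"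
proof -
  obtain r where "r > 0" and r: "\<And>x. x \<noteq> xbar \<Longrightarrow> dist x xbar < r \<Longrightarrow> HH xbar < HH x"
    using xbar_isol by blast
  have "V wbar < V w" if "w \<noteq> wbar" "dist w wbar < r" for w
  proof (cases "plant_state w = xbar")
    case True
    with that(1) have "snd (snd w) - wcbar \<noteq> 0"
      by (auto simp: prod_eq_iff)
    then have "0 < (snd (snd w) - wcbar) \<bullet> (Ki *v (snd (snd w) - wcbar))"
      using Ki_pd unfolding pos_def_def by blast
    with True show ?thesis
      by (simp add: V_def)
  next
    case False
    with that(2) have "HH xbar < HH (plant_state w)"
      using dist_plant_state_le[of w wbar] by (intro r) auto
    with pos_def_quadratic_nonneg[OF Ki_pd, of "snd (snd w) - wcbar"] show ?thesis
      by (simp add: V_def)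
  qed
  with \<open>r > 0\<close> show ?thesis
    by blast
qed

lemma V_sublevels_bounded:
  assumes "radially_unbounded HH"
  shows "\<exists>R. \<forall>w. V w \<le> M \<longrightarrow> norm w \<le> R"
proof -
  obtain l where "l > 0" and l: "\<And>v. l * (norm v)\<^sup>2 \<le> v \<bullet> (Ki *v v)"
    using pos_def_quadratic_lower_bound[OF Ki_pd] by blast
  obtain b where b: "\<And>x. b \<le> norm x \<Longrightarrow> M + HH xbar + 1 \<le> HH x"
    using assms unfolding radially_unbounded_def filterlim_at_top eventually_at_infinity by blast
  have "norm w \<le> b + sqrt (2 * \<bar>M\<bar> / l) + norm wcbar" if "V w \<le> M" for w
  proof -
    let ?p = "snd (snd w) - wcbar"
    have HH_ge: "HH xbar \<le> HH (plant_state w)"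
      using xbar_min[of "plant_state w"] by simp
    have quad: "0 \<le> ?p \<bullet> (Ki *v ?p)"
      using Ki_pd by (rule pos_def_quadratic_nonneg)
    have "norm (plant_state w) \<le> b"
    proof (rule ccontr)
      assume "\<not> norm (plant_state w) \<le> b"
      then have "M + HH xbar + 1 \<le> HH (plant_state w)"
        by (intro b) simp
      with that quad show False
        by (simp add: V_def)
    qed
    moreover have "l * (norm ?p)\<^sup>2 \<le> 2 * \<bar>M\<bar>"
      using that l[of ?p] HH_ge by (simp add: V_def)
    then have "(norm ?p)\<^sup>2 \<le> 2 * \<bar>M\<bar> / l"
      using \<open>l > 0\<close> by (simp add: field_simps mult.commute)
    then have "norm ?p \<le> sqrt (2 * \<bar>M\<bar> / l)"
      by (simp add: real_le_rsqrt)
    then have "norm (snd (snd w)) \<le> sqrt (2 * \<bar>M\<bar> / l) + norm wcbar"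
      using norm_triangle_sub[of "snd (snd w)" wcbar] by simp
    ultimately show ?thesis
      using norm_le_plant_state[of w] by simp
  qed
  then show ?thesis
    by blast
qed

lemma lyap_stable_wbar: "lyap_stable F wbar"
  using equilibrium V_has_gradient orbital_derivative_nonpos V_strict_local_min
  by (rule lyap_stable_if_strict_local_min)

lemma asym_stable_wbar: "detectable F Yu wbar \<Longrightarrow> asym_stable F wbar"
  using continuous_F V_has_gradient orbital_derivative_nonpos orbital_derivative_eq_0_imp _ lyap_stable_wbar
  by (rule asym_stable_if_lyapunov_detectable)

lemma glob_stable_wbar: "radially_unbounded HH \<Longrightarrow> glob_stable F wbar"
  using V_has_gradient orbital_derivative_nonpos lyap_stable_wbar V_sublevels_bounded
  by (rule glob_stable_if_sublevels_bounded)

lemma glob_asym_stable_wbar: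
  "radially_unbounded HH \<Longrightarrow> detectable F Yu wbar \<Longrightarrow> glob_asym_stable F wbar"
  using continuous_F V_has_gradient orbital_derivative_nonpos orbital_derivative_eq_0_imp _
    lyap_stable_wbar V_sublevels_bounded
  by (rule glob_asym_stable_if_sublevels_bounded)

end

theorem proposition4:
  fixes Jaa :: "(real^'m) \<times> (real^'s) \<Rightarrow> real^'m^'m"
    and Jau :: "(real^'m) \<times> (real^'s) \<Rightarrow> real^'s^'m"
    and Juu :: "(real^'m) \<times> (real^'s) \<Rightarrow> real^'s^'s"
    and Raa :: "(real^'m) \<times> (real^'s) \<Rightarrow> real^'m^'m"
    and Rau :: "(real^'m) \<times> (real^'s) \<Rightarrow> real^'s^'m"
    and Ruu :: "(real^'m) \<times> (real^'s) \<Rightarrow> real^'s^'s"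
    and Gd :: "(real^'m) \<times> (real^'s) \<Rightarrow> real^'m^'m"
    and H :: "(real^'m) \<times> (real^'s) \<Rightarrow> real"
    and da du :: "real^'m"
    and Ki :: "real^'m^'m"
    and xbar :: "(real^'m) \<times> (real^'s)"
  assumes H_smooth: "smooth H" and H_nonneg: "\<forall>x. H x \<ge> 0"
    and smooth_J: "smooth Jaa" "smooth Jau" "smooth Juu"
    and smooth_R: "smooth Raa" "smooth Rau" "smooth Ruu"
    and smooth_Gd: "smooth Gd"
    and J_skew: "\<forall>x. transpose (Jaa x) = - Jaa x" "\<forall>x. transpose (Juu x) = - Juu x"
    and R_sym: "\<forall>x. transpose (Raa x) = Raa x" "\<forall>x. transpose (Ruu x) = Ruu x"
    and R_psd: "\<forall>x. block_psd (Raa x) (Rau x) (Ruu x)"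
    and Gd_rank: "\<forall>x. rank (Gd x) = CARD('m)"
    and Gd_neg: "\<forall>x. neg_def (Gd x)"
    and xbar_min: "\<forall>x. H xbar + fst xbar \<bullet> du \<le> H x + fst x \<bullet> du"
    and xbar_isol: "\<exists>r>0. \<forall>x. x \<noteq> xbar \<longrightarrow> dist x xbar < r \<longrightarrow>
                      H xbar + fst xbar \<bullet> du < H x + fst x \<bullet> du"
    and Ki_sym: "transpose Ki = Ki" and Ki_pd: "pos_def Ki"
  shows "let F = closed_loop_w Jaa Jau Juu Raa Rau Ruu Gd da du Ki H;
             HH = (\<lambda>x. H x + fst x \<bullet> du);
             wcbar = matrix_inv Ki *v (da + du);
             wbar = (fst xbar, snd xbar, wcbar);
             Yu = (\<lambda>w::(real^'m) \<times> (real^'s) \<times> (real^'m).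
                     grad_a HH (fst w, fst (snd w)) + Ki *v (snd (snd w) - wcbar))
         in lyap_stable F wbar
            \<and> (detectable F Yu wbar \<longrightarrow> asym_stable F wbar)
            \<and> (radially_unbounded HH \<longrightarrow>
                 glob_stable F wbar \<and> (detectable F Yu wbar \<longrightarrow> glob_asym_stable F wbar))"
proof -
  interpret pH_closed_loop Jaa Jau Juu Raa Rau Ruu Gd H da du Ki xbar
  proof
    show "Ck 1 H"
      using H_smooth by (rule smooth_imp_C1)
    show "continuous_on UNIV Jau" "continuous_on UNIV Juu" "continuous_on UNIV Rau"
      "continuous_on UNIV Ruu" "continuous_on UNIV Gd"
      using smooth_J(2,3) smooth_R(2,3) smooth_Gd by (simp_all add: smooth_imp_continuous_on)
    show "0 \<le> v \<bullet> (Ruu x *v v)" for x v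
      using R_psd by (blast intro: block_psd_lower_right)
  qed (use J_skew(2) Gd_neg xbar_min xbar_isol Ki_sym Ki_pd in blast)+
  show ?thesis
    using lyap_stable_wbar asym_stable_wbar glob_stable_wbar glob_asym_stable_wbar
    unfolding Let_def by blast
qed

end
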